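(* If the Fischer space $\Pi(D)$ is of symplectic type, then $\mathcal{A}(D)/\mathcal{V}(D)$ is an abelian Lie algebra (all products are zero).
   Context: Let $D$ be a class of $3$-transpositions generating a group $G$ (a conjugacy class of involutions with $o(de)\in\{1,2,3\}$ for $d,e\in D$). $\Pi(D)$ has point set $D$ and lines the triples $\{d,e,d^e\}$ with $d,e$ non-commuting; it is of symplectic type if it contains a dual affine plane of order $2$ but no affine plane of order $3$ as subspace generated by two intersecting lines. $\mathcal{A}(D)$ is the $\mathbb{F}_2$-space with basis $D$ and bilinear product $d*e=d+e+f$ if $\{d,e,f\}$ is a line, $0$ otherwise; the form $\langle d,e\rangle$ is $1$ if $d,e$ do not commute and $0$ otherwise; $\mathcal{V}(D)$ is its radical. *)

theory Defs
  imports "HOL-Algebra.Multiplicative_Group" "HOL-Algebra.Generated_Groups" "HOL-Library.Z2"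
begin

definition three_transposition_class :: "('a, 'b) monoid_scheme \<Rightarrow> 'a set \<Rightarrow> bool" where
  "three_transposition_class G D \<longleftrightarrow>
     group G \<and> D \<subseteq> carrier G \<and>
     (\<exists>d0\<in>D. D = {g \<otimes>\<^bsub>G\<^esub> d0 \<otimes>\<^bsub>G\<^esub> inv\<^bsub>G\<^esub> g | g. g \<in> carrier G}) \<and>
     (\<forall>d\<in>D. d \<noteq> \<one>\<^bsub>G\<^esub> \<and> d \<otimes>\<^bsub>G\<^esub> d = \<one>\<^bsub>G\<^esub>) \<and>
     (\<forall>d\<in>D. \<forall>e\<in>D. group.ord G (d \<otimes>\<^bsub>G\<^esub> e) \<in> {1, 2, 3})"

definition generates :: "('a, 'b) monoid_scheme \<Rightarrow> 'a set \<Rightarrow> bool" where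
  "generates G D \<longleftrightarrow> generate G D = carrier G"

definition conj_by :: "('a, 'b) monoid_scheme \<Rightarrow> 'a \<Rightarrow> 'a \<Rightarrow> 'a" where
  "conj_by G d e = inv\<^bsub>G\<^esub> e \<otimes>\<^bsub>G\<^esub> d \<otimes>\<^bsub>G\<^esub> e"

definition commute :: "('a, 'b) monoid_scheme \<Rightarrow> 'a \<Rightarrow> 'a \<Rightarrow> bool" where
  "commute G d e \<longleftrightarrow> d \<otimes>\<^bsub>G\<^esub> e = e \<otimes>\<^bsub>G\<^esub> d"

definition fischer_lines :: "('a, 'b) monoid_scheme \<Rightarrow> 'a set \<Rightarrow> 'a set set" where
  "fischer_lines G D = {{d, e, conj_by G d e} | d e. d \<in> D \<and> e \<in> D \<and> \<not> commute G d e}"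

definition fischer_subspace :: "('a, 'b) monoid_scheme \<Rightarrow> 'a set \<Rightarrow> 'a set \<Rightarrow> bool" where
  "fischer_subspace G D S \<longleftrightarrow> S \<subseteq> D \<and>
     (\<forall>L\<in>fischer_lines G D. \<forall>x\<in>L. \<forall>y\<in>L. x \<noteq> y \<and> x \<in> S \<and> y \<in> S \<longrightarrow> L \<subseteq> S)"

definition generated_subspace :: "('a, 'b) monoid_scheme \<Rightarrow> 'a set \<Rightarrow> 'a set \<Rightarrow> 'a set" where
  "generated_subspace G D X = \<Inter>{S. fischer_subspace G D S \<and> X \<subseteq> S}"

definition induced_lines :: "('a, 'b) monoid_scheme \<Rightarrow> 'a set \<Rightarrow> 'a set \<Rightarrow> 'a set set" where
  "induced_lines G D P = {L \<in> fischer_lines G D. L \<subseteq> P}"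

definition is_dual_affine_plane_2 :: "('a, 'b) monoid_scheme \<Rightarrow> 'a set \<Rightarrow> 'a set \<Rightarrow> bool" where
  "is_dual_affine_plane_2 G D P \<longleftrightarrow> finite P \<and> card P = 6 \<and>
     (\<forall>x\<in>P. card {L \<in> induced_lines G D P. x \<in> L} = 2) \<and>
     (\<forall>L1\<in>induced_lines G D P. \<forall>L2\<in>induced_lines G D P. L1 \<noteq> L2 \<longrightarrow> card (L1 \<inter> L2) = 1)"

text \<open>Affine plane of order 3 (9 points, every two distinct points on a common line;
  lines have 3 points, so this is the Steiner triple system AG(2,3)).\<close>
definition is_affine_plane_3 :: "('a, 'b) monoid_scheme \<Rightarrow> 'a set \<Rightarrow> 'a set \<Rightarrow> bool" where
  "is_affine_plane_3 G D P \<longleftrightarrow> finite P \<and> card P = 9 \<and>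
     (\<forall>x\<in>P. \<forall>y\<in>P. x \<noteq> y \<longrightarrow> (\<exists>L\<in>induced_lines G D P. x \<in> L \<and> y \<in> L))"

definition fischer_plane :: "('a, 'b) monoid_scheme \<Rightarrow> 'a set \<Rightarrow> 'a set \<Rightarrow> bool" where
  "fischer_plane G D P \<longleftrightarrow> (\<exists>L1\<in>fischer_lines G D. \<exists>L2\<in>fischer_lines G D.
      L1 \<noteq> L2 \<and> L1 \<inter> L2 \<noteq> {} \<and> P = generated_subspace G D (L1 \<union> L2))"

definition symplectic_type :: "('a, 'b) monoid_scheme \<Rightarrow> 'a set \<Rightarrow> bool" where
  "symplectic_type G D \<longleftrightarrow>
     (\<exists>P. fischer_plane G D P \<and> is_dual_affine_plane_2 G D P) \<and>
     \<not> (\<exists>P. fischer_plane G D P \<and> is_affine_plane_3 G D P)"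

text \<open>The F_2-space A(D) with basis D: finitely supported functions D -> F_2.\<close>
definition alg_space :: "'a set \<Rightarrow> ('a \<Rightarrow> bit) set" where
  "alg_space D = {x. finite {d. x d \<noteq> 0} \<and> {d. x d \<noteq> 0} \<subseteq> D}"

definition supp :: "('a \<Rightarrow> bit) \<Rightarrow> 'a set" where
  "supp x = {d. x d \<noteq> 0}"

definition basis_prod :: "('a, 'b) monoid_scheme \<Rightarrow> 'a \<Rightarrow> 'a \<Rightarrow> ('a \<Rightarrow> bit)" where
  "basis_prod G d e = (if \<not> commute G d e
     then (\<lambda>c. (if c = d then 1 else 0) + (if c = e then 1 else 0) + (if c = conj_by G d e then 1 else 0))
     else (\<lambda>c. 0))"

definition alg_prod :: "('a, 'b) monoid_scheme \<Rightarrow> ('a \<Rightarrow> bit) \<Rightarrow> ('a \<Rightarrow> bit) \<Rightarrow> ('a \<Rightarrow> bit)" where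
  "alg_prod G x y = (\<lambda>c. \<Sum>d\<in>supp x. \<Sum>e\<in>supp y. x d * y e * basis_prod G d e c)"

definition basis_form :: "('a, 'b) monoid_scheme \<Rightarrow> 'a \<Rightarrow> 'a \<Rightarrow> bit" where
  "basis_form G d e = (if commute G d e then 0 else 1)"

definition alg_form :: "('a, 'b) monoid_scheme \<Rightarrow> ('a \<Rightarrow> bit) \<Rightarrow> ('a \<Rightarrow> bit) \<Rightarrow> bit" where
  "alg_form G x y = (\<Sum>d\<in>supp x. \<Sum>e\<in>supp y. x d * y e * basis_form G d e)"

definition alg_radical :: "('a, 'b) monoid_scheme \<Rightarrow> 'a set \<Rightarrow> ('a \<Rightarrow> bit) set" where
  "alg_radical G D = {x \<in> alg_space D. \<forall>y\<in>alg_space D. alg_form G x y = 0}"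

end

theory Submission
  imports Defs
begin

text \<open>By bilinearity, \<open>A(D) * A(D) \<subseteq> V(D)\<close> reduces to: for every line \<open>{d, e, f}\<close> and every
  \<open>w \<in> D\<close>, the vector \<open>d + e + f\<close> is orthogonal to \<open>w\<close>, i.e. \<open>w\<close> fails to commute with an even
  number of \<open>d, e, f\<close>. If \<open>w\<close> commutes with two of them, it commutes with the third, which is the
  conjugate of one of them by the other. If \<open>w\<close> commutes with none of them, then \<open>d, e, w\<close> span
  a plane whose nine points, coordinatised by \<open>(\<int>/3)\<^sup>2\<close> so that conjugation by \<open>v\<close> becomes the
  map \<open>u \<mapsto> -u - v\<close>, form an affine plane of order 3; symplectic type excludes this.\<close>

text \<open>Keep \<open>+\<close> and \<open>*\<close> on \<open>bit\<close> as ring operations, so that sums can be manipulated by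
  distributivity; by default the simplifier rewrites them to \<open>xor\<close> and \<open>and\<close>.\<close>
declare add_bit_eq_xor[simp del] mult_bit_eq_and[simp del]

text \<open>The properties of a class of 3-transpositions used below; \<open>braid\<close> expresses \<open>o(de) = 3\<close>
  for non-commuting \<open>d, e\<close>.\<close>
locale three_transpositions = group G for G (structure) +
  fixes D
  assumes D_subset_carrier: "D \<subseteq> carrier G"
    and D_involution[simp]: "\<And>d. d \<in> D \<Longrightarrow> d \<otimes> d = \<one>"
    and conj_by_closed: "\<And>d e. d \<in> D \<Longrightarrow> e \<in> D \<Longrightarrow> conj_by G d e \<in> D"
    and braid: "\<And>d e. d \<in> D \<Longrightarrow> e \<in> D \<Longrightarrow> \<not> commute G d e \<Longrightarrow> d \<otimes> e \<otimes> d = e \<otimes> d \<otimes> e"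

lemma (in group) braid_of_ord_le_3:
  assumes xc: "x \<in> carrier G" and yc: "y \<in> carrier G"
    and xx: "x \<otimes> x = \<one>" and yy: "y \<otimes> y = \<one>"
    and ord: "ord (x \<otimes> y) \<in> {1, 2, 3}" and nc: "\<not> commute G x y"
  shows "x \<otimes> y \<otimes> x = y \<otimes> x \<otimes> y"
proof -
  have ix: "inv x = x" using xx xc by (simp add: inv_equality)
  have iy: "inv y = y" using yy yc by (simp add: inv_equality)
  have xyc: "x \<otimes> y \<in> carrier G" using xc yc by simp
  have pw: "(x \<otimes> y) [^] ord (x \<otimes> y) = \<one>" using xyc by simp
  consider "ord (x \<otimes> y) = 1" | "ord (x \<otimes> y) = 2" | "ord (x \<otimes> y) = 3" using ord by auto
  then show ?thesis
  proof cases
    case 1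
    then have "x \<otimes> y = \<one>" using ord_eq_1 xyc by simp
    then have "inv y = x" using inv_equality[of x y] xc yc by simp
    then have "y = x" using ix yc by (metis inv_inv)
    then show ?thesis using nc by (simp add: commute_def)
  next
    case 2
    then have "x \<otimes> y \<otimes> (x \<otimes> y) = \<one>" using pw xyc by (simp add: numeral_2_eq_2)
    then have "inv (x \<otimes> y) = x \<otimes> y" using inv_equality xyc by simp
    then have "x \<otimes> y = y \<otimes> x" using xc yc ix iy by (simp add: inv_mult_group)
    then show ?thesis using nc by (simp add: commute_def)
  next
    case 3
    then have "(x \<otimes> y \<otimes> x) \<otimes> (y \<otimes> x \<otimes> y) = \<one>" using pw xc yc
      by (simp add: numeral_3_eq_3 m_assoc)
    then have "inv (y \<otimes> x \<otimes> y) = x \<otimes> y \<otimes> x" using inv_equality xc yc by simp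
    moreover have "inv (y \<otimes> x \<otimes> y) = y \<otimes> x \<otimes> y" using xc yc ix iy
      by (simp add: inv_mult_group m_assoc)
    ultimately show ?thesis by simp
  qed
qed

lemma three_transpositions_if_class:
  assumes "three_transposition_class G D"
  shows "three_transpositions G D"
proof -
  interpret group G using assms unfolding three_transposition_class_def by blast
  have Ds: "D \<subseteq> carrier G"
    and cl: "\<exists>d0\<in>D. D = {g \<otimes>\<^bsub>G\<^esub> d0 \<otimes>\<^bsub>G\<^esub> inv\<^bsub>G\<^esub> g | g. g \<in> carrier G}"
    and inv: "\<forall>d\<in>D. d \<noteq> \<one>\<^bsub>G\<^esub> \<and> d \<otimes>\<^bsub>G\<^esub> d = \<one>\<^bsub>G\<^esub>"
    and ord: "\<forall>d\<in>D. \<forall>e\<in>D. group.ord G (d \<otimes>\<^bsub>G\<^esub> e) \<in> {1, 2, 3}"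
    using assms unfolding three_transposition_class_def by auto
  obtain d0 where d0: "d0 \<in> D" and D_eq: "D = {g \<otimes>\<^bsub>G\<^esub> d0 \<otimes>\<^bsub>G\<^esub> inv\<^bsub>G\<^esub> g | g. g \<in> carrier G}"
    using cl by blast
  show ?thesis
  proof
    show "D \<subseteq> carrier G" by (rule Ds)
    show "\<And>d. d \<in> D \<Longrightarrow> d \<otimes>\<^bsub>G\<^esub> d = \<one>\<^bsub>G\<^esub>" using inv by auto
    show "\<And>d e. d \<in> D \<Longrightarrow> e \<in> D \<Longrightarrow> \<not> commute G d e \<Longrightarrow>
        d \<otimes>\<^bsub>G\<^esub> e \<otimes>\<^bsub>G\<^esub> d = e \<otimes>\<^bsub>G\<^esub> d \<otimes>\<^bsub>G\<^esub> e"
      using braid_of_ord_le_3 Ds inv ord by (meson subsetD)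
  next
    fix d e assume dD: "d \<in> D" and eD: "e \<in> D"
    obtain g where g: "g \<in> carrier G" and dg: "d = g \<otimes>\<^bsub>G\<^esub> d0 \<otimes>\<^bsub>G\<^esub> inv\<^bsub>G\<^esub> g"
      using dD D_eq by blast
    have ec: "e \<in> carrier G" using eD Ds by auto
    have "conj_by G d e = (inv\<^bsub>G\<^esub> e \<otimes>\<^bsub>G\<^esub> g) \<otimes>\<^bsub>G\<^esub> d0 \<otimes>\<^bsub>G\<^esub> inv\<^bsub>G\<^esub> (inv\<^bsub>G\<^esub> e \<otimes>\<^bsub>G\<^esub> g)"
      unfolding conj_by_def dg using g ec d0 Ds by (simp add: inv_mult_group m_assoc subsetD)
    then show "conj_by G d e \<in> D" using D_eq g ec by blast
  qed
qed

context three_transpositions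
begin

lemma D_carrier[simp]: "d \<in> D \<Longrightarrow> d \<in> carrier G"
  using D_subset_carrier by auto

lemma D_cancel[simp]: "d \<in> D \<Longrightarrow> x \<in> carrier G \<Longrightarrow> d \<otimes> (d \<otimes> x) = x"
  by (metis D_carrier D_involution l_one m_assoc)

lemma inv_D[simp]: "d \<in> D \<Longrightarrow> inv d = d"
  by (simp add: inv_equality)

lemma conj_by_involution:
  "g \<in> carrier G \<Longrightarrow> g \<otimes> g = \<one> \<Longrightarrow> x \<in> carrier G \<Longrightarrow> conj_by G x g = g \<otimes> (x \<otimes> g)"
  by (simp add: conj_by_def m_assoc inv_equality)

lemma conj_by_D: "g \<in> D \<Longrightarrow> x \<in> carrier G \<Longrightarrow> conj_by G x g = g \<otimes> (x \<otimes> g)"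
  by (simp add: conj_by_involution)

lemma conj_by_self: "d \<in> D \<Longrightarrow> conj_by G d d = d"
  by (simp add: conj_by_D)

lemma conj_by_conj_by_distrib: "g \<in> D \<Longrightarrow> x \<in> D \<Longrightarrow> y \<in> D \<Longrightarrow>
    conj_by G (conj_by G x y) g = conj_by G (conj_by G x g) (conj_by G y g)"
  by (simp add: conj_by_D conj_by_involution m_assoc)

lemma conj_by_conj_by_right: "g \<in> D \<Longrightarrow> x \<in> D \<Longrightarrow> y \<in> D \<Longrightarrow>
    conj_by G x (conj_by G y g) = conj_by G (conj_by G (conj_by G x g) y) g"
  by (simp add: conj_by_D conj_by_involution m_assoc)

lemma commute_sym: "commute G x y \<longleftrightarrow> commute G y x"
  by (auto simp: commute_def)

lemma commute_refl: "commute G x x"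
  by (simp add: commute_def)

lemma commute_conj_by: "g \<in> D \<Longrightarrow> x \<in> D \<Longrightarrow> y \<in> D \<Longrightarrow> commute G x y \<Longrightarrow>
    commute G (conj_by G x g) (conj_by G y g)"
  unfolding commute_def by (simp add: conj_by_D m_assoc) (metis D_carrier m_assoc)

lemma commute_conj_by_right: "w \<in> D \<Longrightarrow> x \<in> D \<Longrightarrow> y \<in> D \<Longrightarrow>
    commute G w x \<Longrightarrow> commute G w y \<Longrightarrow> commute G w (conj_by G x y)"
  unfolding commute_def by (simp add: conj_by_D) (metis D_carrier m_assoc m_closed)

lemma line_conj_by:
  assumes "a \<in> D" "b \<in> D" "\<not> commute G a b"
  shows "conj_by G b a = conj_by G a b"
    and "conj_by G a (conj_by G a b) = b"
    and "conj_by G (conj_by G a b) a = b"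
    and "conj_by G b (conj_by G a b) = a"
    and "conj_by G (conj_by G a b) b = a"
proof -
  have ab: "conj_by G a b \<in> D" using conj_by_closed assms by auto
  have br: "a \<otimes> (b \<otimes> a) = b \<otimes> (a \<otimes> b)" using braid assms by (simp add: m_assoc)
  have br3: "a \<otimes> (b \<otimes> (a \<otimes> w)) = b \<otimes> (a \<otimes> (b \<otimes> w))" if "w \<in> carrier G" for w
    using br assms that by (metis D_carrier m_assoc m_closed)
  show "conj_by G b a = conj_by G a b" using assms by (simp add: conj_by_D br)
  show "conj_by G a (conj_by G a b) = b" using assms ab
    by (simp add: conj_by_D m_assoc br3 flip: br)
  show "conj_by G (conj_by G a b) a = b"
    and "conj_by G b (conj_by G a b) = a"
    and "conj_by G (conj_by G a b) b = a"
    using assms ab by (simp_all add: conj_by_D m_assoc br3)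
qed

lemma line_noncommute:
  assumes "a \<in> D" "b \<in> D" "\<not> commute G a b"
  shows "\<not> commute G a (conj_by G a b)" "\<not> commute G b (conj_by G a b)"
proof -
  have ab: "conj_by G a b \<in> D" using conj_by_closed assms by auto
  show "\<not> commute G a (conj_by G a b)"
  proof
    assume "commute G a (conj_by G a b)"
    then have "commute G (conj_by G a a) (conj_by G (conj_by G a b) a)"
      using commute_conj_by assms ab by blast
    then show False using assms line_conj_by conj_by_self by auto
  qed
  show "\<not> commute G b (conj_by G a b)"
  proof
    assume "commute G b (conj_by G a b)"
    then have "commute G (conj_by G b b) (conj_by G (conj_by G a b) b)"
      using commute_conj_by assms ab by blast
    then show False using assms line_conj_by conj_by_self by (auto simp: commute_sym)
  qed
qed

lemma line_distinct:
  assumes "a \<in> D" "b \<in> D" "\<not> commute G a b"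
  shows "a \<noteq> b" "a \<noteq> conj_by G a b" "b \<noteq> conj_by G a b"
  using assms line_noncommute[OF assms] commute_refl by metis+

lemma line_in_fischer_lines:
  "a \<in> D \<Longrightarrow> b \<in> D \<Longrightarrow> \<not> commute G a b \<Longrightarrow> {a, b, conj_by G a b} \<in> fischer_lines G D"
  unfolding fischer_lines_def by blast

lemma fischer_subspace_conj_by_closed:
  assumes S: "fischer_subspace G D S" and "a \<in> S" "b \<in> S" "a \<in> D" "b \<in> D" "\<not> commute G a b"
  shows "conj_by G a b \<in> S"
proof -
  have "{a, b, conj_by G a b} \<subseteq> S"
    using S assms line_in_fischer_lines[of a b] line_distinct[of a b]
    unfolding fischer_subspace_def by (meson insertCI)
  then show ?thesis by simp
qed

end

text \<open>A line \<open>{d, e, f}\<close> together with a point \<open>c\<close> commuting with none of its points.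
  Such a configuration spans an affine plane of order 3.\<close>
locale affine_triangle = three_transpositions +
  fixes d e c
  assumes d_D: "d \<in> D" and e_D: "e \<in> D" and c_D: "c \<in> D"
    and noncommute_d_e: "\<not> commute G d e" and noncommute_d_c: "\<not> commute G d c"
    and noncommute_e_c: "\<not> commute G e c" and noncommute_c_de: "\<not> commute G c (conj_by G d e)"
begin

definition f where "f = conj_by G d e"
definition x where "x = conj_by G c d"

text \<open>The nine points, indexed by \<open>{0,1,2}\<^sup>2\<close>: \<open>d\<close> is the origin, \<open>d, e, f\<close> the first axis,
  \<open>d, c, x\<close> the second one.\<close>
definition grid :: "int \<Rightarrow> int \<Rightarrow> 'a" where
  "grid a b = (if a = 0 then (if b = 0 then d else if b = 1 then c else x)
     else if a = 1 then (if b = 0 then e else if b = 1 then conj_by G x f else conj_by G c f)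
     else (if b = 0 then f else if b = 1 then conj_by G x e else conj_by G c e))"

lemma f_D: "f \<in> D" and x_D: "x \<in> D"
  using conj_by_closed d_D e_D c_D by (auto simp: f_def x_def)

lemma grid_D: "grid a b \<in> D"
  unfolding grid_def using conj_by_closed d_D e_D c_D f_D x_D by auto

lemma noncommute_c_d: "\<not> commute G c d"
  and noncommute_c_e: "\<not> commute G c e"
  and noncommute_c_f: "\<not> commute G c f"
  using noncommute_d_c noncommute_e_c noncommute_c_de commute_sym by (auto simp: f_def)

lemmas line_de = line_conj_by[OF d_D e_D noncommute_d_e]
lemmas line_cd = line_conj_by[OF c_D d_D noncommute_c_d]
lemmas line_ce = line_conj_by[OF c_D e_D noncommute_c_e]
lemmas line_cf = line_conj_by[OF c_D f_D noncommute_c_f]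

lemma noncommute_x_e: "\<not> commute G x e"
proof
  assume "commute G x e"
  then have "commute G (conj_by G x d) (conj_by G e d)" using commute_conj_by x_D e_D d_D by blast
  then show False using line_de line_cd noncommute_c_f by (simp add: x_def f_def)
qed

lemmas line_xe = line_conj_by[OF x_D e_D noncommute_x_e]

lemma conj_by_grid_d:
  assumes "a \<in> {0,1,2}" "b \<in> {0,1,2}"
  shows "conj_by G (grid a b) d = grid ((-a) mod 3) ((-b) mod 3)"
proof -
  have "conj_by G (conj_by G c e) d = conj_by G x f"
    using conj_by_conj_by_distrib[OF d_D c_D e_D] line_de by (simp add: x_def f_def)
  moreover have "conj_by G (conj_by G c f) d = conj_by G x e"
    using conj_by_conj_by_distrib[OF d_D c_D f_D] line_de by (simp add: x_def f_def)
  moreover have "conj_by G (conj_by G x f) d = conj_by G c e"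
    using conj_by_conj_by_distrib[OF d_D x_D f_D] line_de line_cd by (simp add: x_def f_def)
  moreover have "conj_by G (conj_by G x e) d = conj_by G c f"
    using conj_by_conj_by_distrib[OF d_D x_D e_D] line_de line_cd by (simp add: x_def f_def)
  ultimately show ?thesis
    using assms line_de line_cd conj_by_self[OF d_D] by (auto simp: grid_def f_def x_def)
qed

lemma conj_by_grid_e:
  assumes "a \<in> {0,1,2}" "b \<in> {0,1,2}"
  shows "conj_by G (grid a b) e = grid ((-a-1) mod 3) ((-b) mod 3)"
proof -
  have "conj_by G (conj_by G c f) e = conj_by G x f"
    using conj_by_conj_by_distrib[OF e_D c_D f_D] conj_by_grid_d[of 2 2] line_de
    by (simp add: grid_def f_def)
  moreover have "conj_by G (conj_by G x f) e = conj_by G c f"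
    using conj_by_conj_by_distrib[OF e_D x_D f_D] conj_by_grid_d[of 2 1] line_de
    by (simp add: grid_def f_def)
  ultimately show ?thesis
    using assms line_de line_ce line_xe conj_by_self[OF e_D] by (auto simp: grid_def f_def x_def)
qed

lemma conj_by_grid_c:
  assumes "a \<in> {0,1,2}" "b \<in> {0,1,2}"
  shows "conj_by G (grid a b) c = grid ((-a) mod 3) ((-b-1) mod 3)"
proof -
  have nc_d_cf: "\<not> commute G d (conj_by G c f)"
  proof
    assume "commute G d (conj_by G c f)"
    then have "commute G (conj_by G d f) (conj_by G (conj_by G c f) f)"
      using commute_conj_by c_D f_D d_D conj_by_closed by blast
    then show False using line_de line_cf noncommute_e_c by (simp add: f_def)
  qed
  have nc_d_ce: "\<not> commute G d (conj_by G c e)"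
  proof
    assume "commute G d (conj_by G c e)"
    then have "commute G (conj_by G d e) (conj_by G (conj_by G c e) e)"
      using commute_conj_by c_D e_D d_D conj_by_closed by blast
    then show False using line_de line_ce noncommute_c_f by (simp add: f_def commute_sym)
  qed
  have "conj_by G (conj_by G x f) c = conj_by G d (conj_by G c f)"
    using conj_by_conj_by_distrib[OF c_D x_D f_D] line_cd line_cf by (simp add: x_def)
  also have "\<dots> = conj_by G (conj_by G c f) d"
    using line_conj_by(1)[OF d_D _ nc_d_cf] conj_by_closed[OF c_D f_D] by simp
  also have "\<dots> = conj_by G x e"
    using conj_by_grid_d[of 1 2] by (simp add: grid_def)
  finally have xf: "conj_by G (conj_by G x f) c = conj_by G x e" .
  have "conj_by G (conj_by G x e) c = conj_by G d (conj_by G c e)"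
    using conj_by_conj_by_distrib[OF c_D x_D e_D] line_cd line_ce by (simp add: x_def)
  also have "\<dots> = conj_by G (conj_by G c e) d"
    using line_conj_by(1)[OF d_D _ nc_d_ce] conj_by_closed[OF c_D e_D] by simp
  also have "\<dots> = conj_by G x f"
    using conj_by_grid_d[of 2 2] by (simp add: grid_def)
  finally have xe: "conj_by G (conj_by G x e) c = conj_by G x f" .
  show ?thesis
    using assms xf xe line_cd line_ce line_cf conj_by_self[OF c_D] by (auto simp: grid_def x_def)
qed

definition pt :: "int \<Rightarrow> int \<Rightarrow> 'a" where
  "pt i j = grid (i mod 3) (j mod 3)"

lemma pt_D: "pt a b \<in> D"
  by (simp add: pt_def grid_D)

lemma pt_cong: "a mod 3 = a' mod 3 \<Longrightarrow> b mod 3 = b' mod 3 \<Longrightarrow> pt a b = pt a' b'"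
  by (simp add: pt_def)

lemma mod_3_cases: "(i::int) mod 3 \<in> {0,1,2}"
  by auto

lemma pt_values:
  "pt 0 0 = d" "pt 1 0 = e" "pt 2 0 = f" "pt 0 1 = c" "pt 0 2 = x"
  "pt 1 1 = conj_by G x f" "pt 1 2 = conj_by G c f" "pt 2 1 = conj_by G x e" "pt 2 2 = conj_by G c e"
  by (simp_all add: pt_def grid_def)

text \<open>Conjugation by \<open>u\<close> acts on the nine points as the point reflection in \<open>(a, b)\<close>,
  i.e. \<open>v \<mapsto> 2(a, b) - v = -(a, b) - v\<close> modulo 3.\<close>
definition acts_as_reflection :: "'a \<Rightarrow> int \<Rightarrow> int \<Rightarrow> bool" where
  "acts_as_reflection u a b \<longleftrightarrow> (\<forall>i j. conj_by G (pt i j) u = pt (-i-a) (-j-b))"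

lemma acts_as_reflection_cong:
  assumes "acts_as_reflection u a b" "a mod 3 = a' mod 3" "b mod 3 = b' mod 3"
  shows "acts_as_reflection u a' b'"
  using assms unfolding acts_as_reflection_def
  by (metis (no_types, opaque_lifting) mod_diff_cong pt_cong)

lemma acts_as_reflection_conj_by:
  assumes "acts_as_reflection u a b" "acts_as_reflection v a' b'" "u \<in> D" "v \<in> D"
  shows "acts_as_reflection (conj_by G u v) (2*a' - a) (2*b' - b)"
  unfolding acts_as_reflection_def
proof (intro allI)
  fix i j
  have "conj_by G (pt i j) (conj_by G u v) = conj_by G (conj_by G (conj_by G (pt i j) v) u) v"
    using conj_by_conj_by_right[OF assms(4) pt_D assms(3)] .
  also have "\<dots> = pt (-i - (2*a' - a)) (-j - (2*b' - b))"
    using assms(1,2) unfolding acts_as_reflection_def by (simp add: algebra_simps)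
  finally show "conj_by G (pt i j) (conj_by G u v) = pt (-i - (2*a' - a)) (-j - (2*b' - b))" .
qed

lemma acts_as_reflection_d: "acts_as_reflection d 0 0"
  unfolding acts_as_reflection_def
  using conj_by_grid_d[OF mod_3_cases mod_3_cases] by (simp add: pt_def mod_minus_eq)

lemma mod_3_minus_minus_1: "(- ((i::int) mod 3) - 1) mod 3 = (- i - 1) mod 3"
  by presburger

lemma acts_as_reflection_e: "acts_as_reflection e 1 0"
  unfolding acts_as_reflection_def using conj_by_grid_e[OF mod_3_cases mod_3_cases]
  by (simp add: pt_def mod_minus_eq mod_3_minus_minus_1)

lemma acts_as_reflection_c: "acts_as_reflection c 0 1"
  unfolding acts_as_reflection_def using conj_by_grid_c[OF mod_3_cases mod_3_cases]
  by (simp add: pt_def mod_minus_eq mod_3_minus_minus_1)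

lemma acts_as_reflection_pt: "acts_as_reflection (pt k l) k l"
proof -
  have refl: "acts_as_reflection (pt k l) k l" if "k \<in> {0,1,2}" "l \<in> {0,1,2}" for k l
  proof -
    note [simp] = pt_values conj_by_closed d_D e_D c_D f_D x_D
    note rd = acts_as_reflection_d and re = acts_as_reflection_e and rc = acts_as_reflection_c
    have rf: "acts_as_reflection f 2 0"
      using acts_as_reflection_conj_by[OF rd re] by (simp add: f_def)
    have rx: "acts_as_reflection x 0 2"
      using acts_as_reflection_cong[OF acts_as_reflection_conj_by[OF rc rd]] by (simp add: x_def)
    have "acts_as_reflection (conj_by G x f) 1 1" "acts_as_reflection (conj_by G c f) 1 2"
      "acts_as_reflection (conj_by G x e) 2 1" "acts_as_reflection (conj_by G c e) 2 2"
      using acts_as_reflection_cong[OF acts_as_reflection_conj_by[OF rx rf]]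
        acts_as_reflection_cong[OF acts_as_reflection_conj_by[OF rc rf]]
        acts_as_reflection_cong[OF acts_as_reflection_conj_by[OF rx re]]
        acts_as_reflection_cong[OF acts_as_reflection_conj_by[OF rc re]]
      by simp_all
    then show ?thesis using that rd re rc rf rx by auto
  qed
  have "pt k l = pt (k mod 3) (l mod 3)" by (rule pt_cong) auto
  then show ?thesis
    using acts_as_reflection_cong[OF refl[OF mod_3_cases mod_3_cases, of k l]] by simp
qed

lemma conj_by_pt: "conj_by G (pt i j) (pt k l) = pt (-i-k) (-j-l)"
  using acts_as_reflection_pt unfolding acts_as_reflection_def by blast

lemma commute_pt_reflect:
  assumes "commute G (pt a b) (pt a' b')"
  shows "commute G (pt (-a-k) (-b-l)) (pt (-a'-k) (-b'-l))"
  using commute_conj_by[OF pt_D pt_D pt_D assms, of k l] by (simp add: conj_by_pt)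

lemma commute_pt_translate:
  assumes "commute G (pt a b) (pt a' b')"
  shows "commute G (pt (a+k) (b+l)) (pt (a'+k) (b'+l))"
  using commute_pt_reflect[OF commute_pt_reflect[OF assms, of 0 0], of "-k" "-l"] by simp

lemma noncommute_origin:
  assumes "(u mod 3, v mod 3) \<noteq> (0, 0)"
  shows "\<not> commute G (pt 0 0) (pt u v)"
proof -
  \<comment> \<open>up to \<open>v \<mapsto> -v\<close> the directions are \<open>(1,0), (0,1), (1,1), (2,1)\<close>; the last two
    are translates of the pairs \<open>f, c\<close> and \<open>e, c\<close>\<close>
  have neg: "\<not> commute G (pt 0 0) (pt u v)" if "\<not> commute G (pt 0 0) (pt (-u) (-v))" for u v
    using that commute_pt_reflect[of 0 0 u v 0 0] by auto
  have "\<not> commute G (pt 0 0) (pt 1 0)" "\<not> commute G (pt 0 0) (pt 0 1)"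
    using noncommute_d_e noncommute_d_c by (simp_all add: pt_values)
  moreover have "\<not> commute G (pt 0 0) (pt 1 1)"
  proof
    assume "commute G (pt 0 0) (pt 1 1)"
    then have "commute G (pt 2 0) (pt 3 1)" using commute_pt_translate[of 0 0 1 1 2 0] by simp
    moreover have "pt 3 1 = pt 0 1" by (rule pt_cong) auto
    ultimately show False using noncommute_c_f commute_sym by (simp add: pt_values)
  qed
  moreover have "\<not> commute G (pt 0 0) (pt 2 1)"
  proof
    assume "commute G (pt 0 0) (pt 2 1)"
    then have "commute G (pt 1 0) (pt 3 1)" using commute_pt_translate[of 0 0 2 1 1 0] by simp
    moreover have "pt 3 1 = pt 0 1" by (rule pt_cong) auto
    ultimately show False using noncommute_e_c by (simp add: pt_values)
  qed
  ultimately have "\<not> commute G (pt 0 0) (pt u v)"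
    if "u \<in> {0,1,2}" "v \<in> {0,1,2}" "(u, v) \<noteq> (0, 0)" for u v
    using that neg[of 2 0] neg[of 0 2] neg[of 2 2] neg[of 1 2]
      pt_cong[of "-2" 1 0 0] pt_cong[of 0 0 "-2" 1] pt_cong[of "-2" 1 "-2" 1]
      pt_cong[of "-1" 2 "-2" 1] by auto
  moreover have "pt u v = pt (u mod 3) (v mod 3)" by (rule pt_cong) auto
  ultimately show ?thesis using assms mod_3_cases by metis
qed

lemma commute_pt_iff: "commute G (pt a b) (pt a' b') \<longleftrightarrow> a mod 3 = a' mod 3 \<and> b mod 3 = b' mod 3"
proof
  assume "commute G (pt a b) (pt a' b')"
  then have "commute G (pt (a-a) (b-b)) (pt (a'-a) (b'-b))"
    using commute_pt_translate[of a b a' b' "-a" "-b"] by simp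
  then show "a mod 3 = a' mod 3 \<and> b mod 3 = b' mod 3"
    using noncommute_origin[of "a'-a" "b'-b"] by simp presburger
next
  assume "a mod 3 = a' mod 3 \<and> b mod 3 = b' mod 3"
  then show "commute G (pt a b) (pt a' b')" using pt_cong commute_refl by metis
qed

lemma pt_eq_iff: "pt a b = pt a' b' \<longleftrightarrow> a mod 3 = a' mod 3 \<and> b mod 3 = b' mod 3"
  using commute_pt_iff commute_refl pt_cong by metis

definition plane :: "'a set" where
  "plane = {pt a b | a b. True}"

lemma pt_in_plane: "pt a b \<in> plane"
  unfolding plane_def by blast

lemma plane_eq_image: "plane = (\<lambda>(a, b). pt a b) ` ({0,1,2} \<times> {0,1,2})"
proof
  show "plane \<subseteq> (\<lambda>(a, b). pt a b) ` ({0,1,2} \<times> {0,1,2})"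
  proof
    fix u assume "u \<in> plane"
    then obtain a b where u: "u = pt a b" unfolding plane_def by auto
    have "u = pt (a mod 3) (b mod 3)" unfolding u by (rule pt_cong) auto
    moreover have "(a mod 3, b mod 3) \<in> {0,1,2} \<times> {0,1,2}" using mod_3_cases by blast
    ultimately show "u \<in> (\<lambda>(a, b). pt a b) ` ({0,1,2} \<times> {0,1,2})"
      by (metis (no_types, lifting) case_prod_conv rev_image_eqI)
  qed
qed (auto simp: plane_def)

lemma finite_plane: "finite plane" and card_plane: "card plane = 9"
proof -
  have "inj_on (\<lambda>(a, b). pt a b) ({0,1,2} \<times> {0,1,2::int})"
  proof (rule inj_onI, clarify)
    fix a b a' b' :: int
    assume "a \<in> {0,1,2}" "b \<in> {0,1,2}" "a' \<in> {0,1,2}" "b' \<in> {0,1,2}" "pt a b = pt a' b'"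
    then show "a = a' \<and> b = b'" unfolding pt_eq_iff by auto
  qed
  then show "card plane = 9" unfolding plane_eq_image by (simp add: card_image)
  show "finite plane" unfolding plane_eq_image by simp
qed

lemma plane_subset_D: "plane \<subseteq> D"
  using pt_D by (auto simp: plane_def)

lemma conj_by_plane:
  assumes "u \<in> plane" "v \<in> plane"
  shows "conj_by G u v \<in> plane"
proof -
  obtain a b a' b' where "u = pt a b" "v = pt a' b'" using assms unfolding plane_def by blast
  then show ?thesis by (simp add: conj_by_pt pt_in_plane)
qed

lemma noncommute_plane:
  assumes "u \<in> plane" "v \<in> plane" "u \<noteq> v"
  shows "\<not> commute G u v"
proof -
  obtain a b a' b' where "u = pt a b" "v = pt a' b'" using assms(1,2) unfolding plane_def by blast
  then show ?thesis using assms(3) by (simp add: commute_pt_iff pt_eq_iff)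
qed

lemma fischer_subspace_plane: "fischer_subspace G D plane"
  unfolding fischer_subspace_def
proof (intro conjI plane_subset_D ballI impI)
  fix L u v assume L: "L \<in> fischer_lines G D" and uv: "u \<in> L" "v \<in> L" "u \<noteq> v \<and> u \<in> plane \<and> v \<in> plane"
  obtain a b where L_eq: "L = {a, b, conj_by G a b}" and ab: "a \<in> D" "b \<in> D" "\<not> commute G a b"
    using L unfolding fischer_lines_def by auto
  have "a \<in> plane \<and> b \<in> plane \<or> a \<in> plane \<and> conj_by G a b \<in> plane \<or>
      b \<in> plane \<and> conj_by G a b \<in> plane"
    using uv unfolding L_eq by blast
  moreover have "b \<in> plane" if "a \<in> plane" "conj_by G a b \<in> plane"
    using conj_by_plane[OF that(2,1)] line_conj_by(3)[OF ab] by simp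
  moreover have "a \<in> plane" if "b \<in> plane" "conj_by G a b \<in> plane"
    using conj_by_plane[OF that(2,1)] line_conj_by(5)[OF ab] by simp
  ultimately have "a \<in> plane" "b \<in> plane" by blast+
  then show "L \<subseteq> plane" using conj_by_plane unfolding L_eq by simp
qed

lemma affine_plane_3_plane: "is_affine_plane_3 G D plane"
  unfolding is_affine_plane_3_def
proof (intro conjI finite_plane card_plane ballI impI)
  fix u v assume uv: "u \<in> plane" "v \<in> plane" "u \<noteq> v"
  have "u \<in> D" "v \<in> D" using uv plane_subset_D by auto
  then have "{u, v, conj_by G u v} \<in> fischer_lines G D"
    using line_in_fischer_lines noncommute_plane uv by blast
  then have "{u, v, conj_by G u v} \<in> induced_lines G D plane"
    unfolding induced_lines_def using uv conj_by_plane by auto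
  then show "\<exists>L\<in>induced_lines G D plane. u \<in> L \<and> v \<in> L" by blast
qed

lemma plane_generated: "plane = generated_subspace G D ({d, e, f} \<union> {d, c, x})"
proof
  have "{d, e, f} \<union> {d, c, x} \<subseteq> plane"
    using pt_in_plane[of 0 0] pt_in_plane[of 1 0] pt_in_plane[of 2 0] pt_in_plane[of 0 1]
      pt_in_plane[of 0 2]
    by (simp add: pt_values)
  then show "generated_subspace G D ({d, e, f} \<union> {d, c, x}) \<subseteq> plane"
    unfolding generated_subspace_def using fischer_subspace_plane by blast
  show "plane \<subseteq> generated_subspace G D ({d, e, f} \<union> {d, c, x})"
    unfolding generated_subspace_def
  proof (rule Inter_greatest)
    fix S assume "S \<in> {S. fischer_subspace G D S \<and> {d, e, f} \<union> {d, c, x} \<subseteq> S}"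
    then have S: "fischer_subspace G D S" and axes: "d \<in> S" "e \<in> S" "f \<in> S" "c \<in> S" "x \<in> S"
      by simp_all
    have "\<not> commute G x f" "\<not> commute G c f" "\<not> commute G x e" "\<not> commute G c e"
      using commute_pt_iff[of 0 2 2 0] commute_pt_iff[of 0 1 2 0] commute_pt_iff[of 0 2 1 0]
        commute_pt_iff[of 0 1 1 0] by (simp_all add: pt_values)
    then have "conj_by G x f \<in> S" "conj_by G c f \<in> S" "conj_by G x e \<in> S" "conj_by G c e \<in> S"
      using fischer_subspace_conj_by_closed[OF S] axes c_D e_D f_D x_D by blast+
    then have "pt a b \<in> S" if "a \<in> {0,1,2}" "b \<in> {0,1,2}" for a b
      using that axes by (auto simp: pt_values)
    then show "plane \<subseteq> S"
      unfolding plane_eq_image by auto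
  qed
qed

lemma exists_affine_plane: "\<exists>P. fischer_plane G D P \<and> is_affine_plane_3 G D P"
proof -
  have "{d, e, f} \<in> fischer_lines G D"
    unfolding f_def by (rule line_in_fischer_lines[OF d_D e_D noncommute_d_e])
  moreover have "{d, c, x} \<in> fischer_lines G D"
    using line_in_fischer_lines[OF d_D c_D noncommute_d_c] line_cd(1) by (simp add: x_def)
  moreover have "c \<notin> {d, e, f}"
    using noncommute_d_c noncommute_e_c noncommute_c_f commute_refl by auto
  then have "{d, e, f} \<noteq> {d, c, x}" by blast
  moreover have "{d, e, f} \<inter> {d, c, x} \<noteq> {}" by blast
  ultimately have "fischer_plane G D plane"
    unfolding fischer_plane_def using plane_generated by (intro bexI conjI)
  then show ?thesis using affine_plane_3_plane by blast
qed

end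

context three_transpositions
begin

lemma basis_form_line_sum:
  assumes no_affine_plane: "\<not> (\<exists>P. fischer_plane G D P \<and> is_affine_plane_3 G D P)"
    and d: "d \<in> D" and e: "e \<in> D" and w: "w \<in> D" and de: "\<not> commute G d e"
  shows "basis_form G d w + basis_form G e w + basis_form G (conj_by G d e) w = 0"
proof -
  let ?f = "conj_by G d e"
  have f: "?f \<in> D" using conj_by_closed d e by blast
  \<comment> \<open>each point of a line is the conjugate of another one by the remaining one\<close>
  have "commute G w d \<Longrightarrow> commute G w e \<Longrightarrow> commute G w ?f"
    and "commute G w d \<Longrightarrow> commute G w ?f \<Longrightarrow> commute G w e"
    and "commute G w e \<Longrightarrow> commute G w ?f \<Longrightarrow> commute G w d"
    using commute_conj_by_right[OF w d e] commute_conj_by_right[OF w f d]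
      commute_conj_by_right[OF w f e] line_conj_by(3,5)[OF d e de] by simp_all
  moreover have "commute G w d \<or> commute G w e \<or> commute G w ?f"
  proof (rule ccontr)
    assume "\<not> (commute G w d \<or> commute G w e \<or> commute G w ?f)"
    then interpret affine_triangle G D d e w
      using d e w de by unfold_locales (simp_all add: commute_sym)
    show False using exists_affine_plane no_affine_plane by blast
  qed
  ultimately show ?thesis by (auto simp: basis_form_def commute_sym)
qed

lemma sum_basis_prod_mult:
  assumes "d \<in> D" "e \<in> D" "finite T" "{d, e, conj_by G d e} \<subseteq> T"
  shows "(\<Sum>c\<in>T. basis_prod G d e c * b c) =
    (if commute G d e then 0 else b d + b e + b (conj_by G d e))"
proof (cases "commute G d e")
  case True
  then show ?thesis by (simp add: basis_prod_def)
next
  case False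
  note distinct = line_distinct[OF assms(1,2) False]
  have "basis_prod G d e c * b c =
      (if c = d then b c else 0) + (if c = e then b c else 0) + (if c = conj_by G d e then b c else 0)"
    for c
    using False distinct
    by (cases "c = d"; cases "c = e"; cases "c = conj_by G d e") (simp_all add: basis_prod_def)
  then show ?thesis using False assms(3,4) by (simp add: sum.distrib)
qed

lemma supp_alg_prod: "supp (alg_prod G x y) \<subseteq> (\<Union>d\<in>supp x. \<Union>e\<in>supp y. {d, e, conj_by G d e})"
proof
  fix c assume c: "c \<in> supp (alg_prod G x y)"
  show "c \<in> (\<Union>d\<in>supp x. \<Union>e\<in>supp y. {d, e, conj_by G d e})"
  proof (rule ccontr)
    assume c_notin: "c \<notin> (\<Union>d\<in>supp x. \<Union>e\<in>supp y. {d, e, conj_by G d e})"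
    have "basis_prod G d e c = 0" if "d \<in> supp x" "e \<in> supp y" for d e
    proof -
      have "c \<noteq> d" "c \<noteq> e" "c \<noteq> conj_by G d e" using that c_notin by blast+
      then show ?thesis by (simp add: basis_prod_def)
    qed
    then have "alg_prod G x y c = 0" unfolding alg_prod_def by simp
    then show False using c by (simp add: supp_def)
  qed
qed

lemma alg_prod_mem_alg_radical:
  assumes no_affine_plane: "\<not> (\<exists>P. fischer_plane G D P \<and> is_affine_plane_3 G D P)"
    and x: "x \<in> alg_space D" and y: "y \<in> alg_space D"
  shows "alg_prod G x y \<in> alg_radical G D"
proof -
  define X Y where "X = supp x" and "Y = supp y"
  define T where "T = (\<Union>d\<in>X. \<Union>e\<in>Y. {d, e, conj_by G d e})"
  define p where "p = alg_prod G x y"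
  have X: "finite X" "X \<subseteq> D" and Y: "finite Y" "Y \<subseteq> D"
    using x y by (auto simp: X_def Y_def supp_def alg_space_def)
  have T: "finite T" "T \<subseteq> D" unfolding T_def using X Y conj_by_closed by blast+
  have supp_p: "supp p \<subseteq> T" unfolding p_def T_def X_def Y_def by (rule supp_alg_prod)
  have "p \<in> alg_space D"
    using supp_p T finite_subset unfolding alg_space_def supp_def by blast
  moreover have "alg_form G p z = 0" if z: "z \<in> alg_space D" for z
  proof -
    define Z where "Z = supp z"
    have Z: "Z \<subseteq> D" using z by (auto simp: Z_def supp_def alg_space_def)
    have orth: "(\<Sum>c\<in>T. p c * basis_form G c w) = 0" if "w \<in> D" for w
    proof -
      have "(\<Sum>c\<in>T. p c * basis_form G c w)
          = (\<Sum>d\<in>X. \<Sum>e\<in>Y. x d * y e * (\<Sum>c\<in>T. basis_prod G d e c * basis_form G c w))"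
        unfolding p_def alg_prod_def X_def Y_def
        by (simp add: sum_distrib_left sum_distrib_right mult.assoc sum.swap[of _ T])
      also have "\<dots> = 0"
      proof (intro sum.neutral ballI)
        fix d e assume "d \<in> X" "e \<in> Y"
        then have "d \<in> D" "e \<in> D" "{d, e, conj_by G d e} \<subseteq> T" using X Y unfolding T_def by auto
        then show "x d * y e * (\<Sum>c\<in>T. basis_prod G d e c * basis_form G c w) = 0"
          using sum_basis_prod_mult[OF _ _ T(1)] basis_form_line_sum[OF no_affine_plane _ _ that]
          by simp
      qed
      finally show ?thesis .
    qed
    have "alg_form G p z = (\<Sum>c\<in>T. \<Sum>w\<in>Z. p c * z w * basis_form G c w)"
      unfolding alg_form_def Z_def
      by (rule sum.mono_neutral_left[OF T(1) supp_p]) (auto simp: supp_def)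
    also have "\<dots> = (\<Sum>w\<in>Z. z w * (\<Sum>c\<in>T. p c * basis_form G c w))"
      by (simp add: sum.swap[of _ T] sum_distrib_left mult.assoc mult.left_commute)
    also have "\<dots> = 0" using orth Z by (simp add: subset_eq)
    finally show ?thesis .
  qed
  ultimately show ?thesis unfolding alg_radical_def p_def by blast
qed

end

theorem lemma5p1:
  fixes G :: "('a, 'b) monoid_scheme" and D :: "'a set"
  assumes "three_transposition_class G D"
    and "generates G D"
    and "symplectic_type G D"
  shows "\<forall>x\<in>alg_space D. \<forall>y\<in>alg_space D. alg_prod G x y \<in> alg_radical G D"
proof -
  interpret three_transpositions G D
    using assms(1) by (rule three_transpositions_if_class)
  have "\<not> (\<exists>P. fischer_plane G D P \<and> is_affine_plane_3 G D P)"
    using assms(3) unfolding symplectic_type_def by blast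
  then show ?thesis using alg_prod_mem_alg_radical by blast
qed

end
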